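(* For the standard EA process, with $A_i=\mathrm{area}(C_i)$ and $D_i=\mathrm{diam}(C_i)$, for every $i\ge0$, \[D_i\le\sqrt{\frac{4A_i}{\pi}}+\sum_{j=0}^{i-1}\sqrt{\frac{2(A_{j+1}-A_j)}{\pi}}.\]
   Context: EA (excluded area) process: let $\mathbb{C}$ be the set of triples $(C,z,\tau)$ with $C\subset\mathbb{R}^2$ compact, $z\in C$, $0\le\tau<\infty$. Given $\mathbf c=(C,z,\tau)$, let $\mu_{\mathbf c}$ be the law of $(C',z',\tau')$ obtained as follows: take a Poisson point process $\tilde\Xi$ of intensity $e^{-\tau}$ on $\mathbb{R}^2\setminus C$, let $\xi$ be its point closest to $z$, and set $z'=\xi$, $C'=C\cup D(z,\|\xi-z\|)$ where $D(z,r)$ is the closed disc of center $z$ and radius $r$, and $\tau'=\tau+\theta$ with $\theta\sim$ Exponential(1) independent of $\tilde\Xi$. The EA process is the Markov chain $(C_i,Z_i,\tau_i)_{i\ge0}$ on $\mathbb{C}$ with transition kernel $\mathbf c\mapsto\mu_{\mathbf c}$. The standard EA process has initial state $(\{\mathbf 0\},\mathbf 0,\tau_0)$ with $\tau_0\sim$ Exponential(1), $\mathbf 0$ the origin. $\mathrm{area}$ is Lebesgue measure, $\mathrm{diam}(B)=\sup_{x,y\in B}\|x-y\|$. *)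

theory Defs
  imports "HOL-Probability.Probability"
begin

type_synonym point = "real^2"

definition pp_space :: "('a::euclidean_space) set measure" where
  "pp_space = sigma UNIV
     {{N. card (N \<inter> B) = k} | B k. B \<in> sets lborel \<and> bounded B}"

definition is_PPP :: "'p measure \<Rightarrow> ('p \<Rightarrow> ('a::euclidean_space) set) \<Rightarrow> 'a set \<Rightarrow> bool" where
  "is_PPP M N S \<longleftrightarrow>
     N \<in> measurable M pp_space \<and>
     (\<forall>\<omega>\<in>space M. N \<omega> \<subseteq> S \<and> (\<forall>B. bounded B \<longrightarrow> finite (N \<omega> \<inter> B))) \<and>
     (\<forall>B. B \<in> sets lborel \<and> bounded B \<longrightarrow>
        (\<forall>k::nat. measure M {\<omega>\<in>space M. card (N \<omega> \<inter> B) = k}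
           = exp (- measure lborel (B \<inter> S)) * measure lborel (B \<inter> S) ^ k / fact k)) \<and>
     (\<forall>(Bs :: nat \<Rightarrow> 'a set) n.
        (\<forall>i<n. Bs i \<in> sets lborel \<and> bounded (Bs i)) \<and> disjoint_family_on Bs {..<n} \<longrightarrow>
        prob_space.indep_vars M (\<lambda>_. count_space UNIV) (\<lambda>i \<omega>. card (N \<omega> \<inter> Bs i)) {..<n})"

text \<open>Point of X closest to z (a.s. unique and existing in the EA process).\<close>
definition nearest :: "point \<Rightarrow> point set \<Rightarrow> point" where
  "nearest z X = (SOME \<xi>. \<xi> \<in> X \<and> (\<forall>y\<in>X. dist z \<xi> \<le> dist z y))"

text \<open>Realisation of the standard EA process from driving noise:
  P i is a unit-intensity Poisson process on R^2 \<times> [0,\<infinity>) (marks), th 0 = tau_0,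
  th (Suc i) = theta used at step i.  The points (x,u) of P i with u \<le> exp(-tau_i)
  and x \<notin> C_i form a PPP of intensity exp(-tau_i) on R^2 - C_i.\<close>
primrec EA_path :: "(nat \<Rightarrow> (point \<times> real) set) \<Rightarrow> (nat \<Rightarrow> real) \<Rightarrow> nat
                      \<Rightarrow> point set \<times> point \<times> real" where
  "EA_path P th 0 = ({0}, 0, th 0)"
| "EA_path P th (Suc i) =
     (case EA_path P th i of (C, z, \<tau>) \<Rightarrow>
        let \<xi> = nearest z {x. \<exists>u. (x, u) \<in> P i \<and> u \<le> exp (- \<tau>) \<and> x \<notin> C}
        in (C \<union> cball z (dist z \<xi>), \<xi>, \<tau> + th (Suc i)))"

end

theory Submission
  imports Defs
begin

text \<open>The bound is deterministic: it holds for every realisation of the driving noise.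
  One step replaces C by C' = C \<union> cball z r with z \<in> C. A diameter of C' either joins two
  points of the disc, hence is at most 2r \<le> sqrt (4 area C' / pi), or leaves C by some
  excess t beyond diam C; in the latter case C' contains a half disc of radius t disjoint
  from C, so t \<le> sqrt (2 (area C' - area C) / pi). Induction over the steps adds up
  these excesses.\<close>

lemma measure_half_ball:
  fixes c v :: "'a::euclidean_space"
  assumes "v \<noteq> 0"
  shows "measure lborel {w. dist w c < t \<and> v \<bullet> (w - c) > 0} = measure lborel (ball c t) / 2"
proof -
  define Hp where "Hp = {w. dist w c < t \<and> v \<bullet> (w - c) > 0}"
  define Hm where "Hm = {w. dist w c < t \<and> v \<bullet> (w - c) < 0}"
  define L where "L = {w. dist w c < t \<and> v \<bullet> (w - c) = 0}"
  have open_Hp: "open Hp" and open_Hm: "open Hm"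
    unfolding Hp_def Hm_def by (intro open_Collect_conj open_Collect_less continuous_intros)+
  have "bounded Hp" "bounded Hm"
    unfolding Hp_def Hm_def by (auto intro: bounded_subset[OF bounded_ball[of c t]] simp: dist_commute)
  then have Hp_meas: "Hp \<in> lmeasurable" and Hm_meas: "Hm \<in> lmeasurable"
    using lmeasurable_open open_Hp open_Hm by auto
  have L_negl: "negligible L"
    by (rule negligible_subset[OF negligible_hyperplane[of v "v \<bullet> c"]])
      (use assms in \<open>auto simp: L_def inner_diff_right\<close>)
  have reflect: "Hm = (\<lambda>x. (-1) *\<^sub>R x + 2 *\<^sub>R c) ` Hp"
  proof -
    have "dist (2 *\<^sub>R c - w) c = dist w c \<and> v \<bullet> (2 *\<^sub>R c - w - c) = - (v \<bullet> (w - c))" for w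
    proof -
      have e: "2 *\<^sub>R c - w - c = -(w - c)" by (simp add: scaleR_2)
      show ?thesis unfolding dist_norm e by (simp add: norm_minus_commute inner_diff_right)
    qed
    then have "w \<in> Hm \<longleftrightarrow> 2 *\<^sub>R c - w \<in> Hp" for w by (auto simp: Hm_def Hp_def)
    then show ?thesis
      by (auto simp: image_iff intro!: bexI[where x = "2 *\<^sub>R c - _"])
  qed
  have "measure lebesgue Hm = measure lebesgue Hp"
    unfolding reflect using measure_lebesgue_affine[of "-1" "2 *\<^sub>R c" Hp] by simp
  moreover have "measure lebesgue (ball c t) = measure lebesgue Hp + measure lebesgue Hm + measure lebesgue L"
  proof (rule measure_Un3_negligible)
    show "L \<in> lmeasurable"
      using L_negl by (auto simp: fmeasurable_def negligible_iff_null_sets null_sets_def)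
  qed (use Hp_meas Hm_meas L_negl in
        \<open>auto simp: Hp_def Hm_def L_def dist_commute intro: negligible_subset[OF negligible_empty]\<close>)
  moreover have "measure lebesgue L = 0"
    using L_negl negligible_imp_measure0 by blast
  ultimately show ?thesis
    using open_Hp by (simp add: Hp_def)
qed

lemma measure_cball_2:
  fixes z :: point
  assumes "r \<ge> 0"
  shows "measure lborel (cball z r) = pi * r\<^sup>2"
  using circle_area[OF assms, of z] content_cball_conv_ball[of z r] by simp

lemma measure_half_ball_2:
  fixes c v :: point
  assumes "v \<noteq> 0" "t \<ge> 0"
  shows "measure lborel {w. dist w c < t \<and> v \<bullet> (w - c) > 0} = pi * t\<^sup>2 / 2"
  using measure_half_ball[OF assms(1)] circle_area[OF assms(2), of c] by simp

lemma measure_le_measure_Un_cball: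
  fixes C :: "'a::euclidean_space set"
  assumes "compact C"
  shows "measure lborel C \<le> measure lborel (C \<union> cball z r)"
    and "measure lborel (cball z r) \<le> measure lborel (C \<union> cball z r)"
  using assms
  by (auto intro!: measure_mono_fmeasurable fmeasurable_compact compact_Un borel_closed compact_imp_closed)

lemma dist_gt_beyond_half_space:
  fixes u x c w :: "'a::real_inner"
  assumes u: "norm u = 1" and c: "c - x = lam *\<^sub>R u" and lam: "D \<le> lam" and D: "0 \<le> D"
    and w: "u \<bullet> (w - c) > 0"
  shows "D < dist x w"
proof -
  have norm_add: "(norm (a + b))\<^sup>2 = (norm a)\<^sup>2 + 2 * (a \<bullet> b) + (norm b)\<^sup>2" for a b :: 'a
    by (simp add: power2_norm_eq_inner inner_add_left inner_add_right inner_commute)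
  have "w - x = (w - c) + lam *\<^sub>R u" using c by (simp add: algebra_simps)
  then have "(norm (w - x))\<^sup>2 = (norm (w - c))\<^sup>2 + 2 * ((w - c) \<bullet> (lam *\<^sub>R u)) + (norm (lam *\<^sub>R u))\<^sup>2"
    using norm_add by presburger
  then have "(norm (w - x))\<^sup>2 = (norm (w - c))\<^sup>2 + 2 * lam * (u \<bullet> (w - c)) + lam\<^sup>2"
    using u by (simp add: inner_commute power_mult_distrib)
  moreover have "(norm (w - c))\<^sup>2 > 0" using w by auto
  moreover have "2 * lam * (u \<bullet> (w - c)) \<ge> 0" using w lam D by simp
  moreover have "D\<^sup>2 \<le> lam\<^sup>2" using lam D by (simp add: power_mono)
  ultimately have "D\<^sup>2 < (norm (w - x))\<^sup>2" by linarith
  then show ?thesis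
    using power_less_imp_less_base by (fastforce simp: dist_norm norm_minus_commute)
qed

text \<open>The half disc of radius t centred at z + (r - t) u, where u points from x towards z,
  and lying on the far side from x, is contained in cball z r, and all its points are
  farther than diameter C from x.\<close>

lemma half_disc_le_measure_increment:
  fixes C :: "point set"
  assumes C: "compact C" and x: "x \<in> C" and z: "z \<in> C" and t: "t > 0"
    and far: "dist x z + r \<ge> diameter C + t"
  shows "pi * t\<^sup>2 / 2 \<le> measure lborel (C \<union> cball z r) - measure lborel C"
proof -
  have bC: "bounded C" using C compact_imp_bounded by blast
  have xz: "dist x z \<le> diameter C" by (rule diameter_bounded_bound[OF bC x z])
  have D0: "diameter C \<ge> 0" using xz zero_le_dist order_trans by blast
  have rt: "r \<ge> t" using far xz by linarith
  define u :: point where "u = (if z = x then axis 1 1 else (1 / norm (z - x)) *\<^sub>R (z - x))"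
  have norm_u: "norm u = 1" by (auto simp: u_def)
  have zx: "z - x = norm (z - x) *\<^sub>R u" by (auto simp: u_def)
  define c where "c = z + (r - t) *\<^sub>R u"
  define lam where "lam = norm (z - x) + (r - t)"
  have cx: "c - x = lam *\<^sub>R u"
  proof -
    have "c - x = (z - x) + (r - t) *\<^sub>R u" by (simp add: c_def algebra_simps)
    also have "\<dots> = lam *\<^sub>R u" by (subst zx) (simp add: lam_def scaleR_add_left)
    finally show ?thesis .
  qed
  have lam: "lam \<ge> diameter C" using far by (simp add: lam_def dist_norm norm_minus_commute)
  define H where "H = {w. dist w c < t \<and> u \<bullet> (w - c) > 0}"
  have H_cball: "H \<subseteq> cball z r"
  proof
    fix w assume "w \<in> H"
    then have "dist w c < t" by (simp add: H_def)
    moreover have "dist c z = r - t" using rt by (simp add: c_def dist_norm norm_u)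
    ultimately show "w \<in> cball z r" using dist_triangle[of w z c] by (simp add: dist_commute)
  qed
  have far_from_x: "diameter C < dist x w" if "w \<in> H" for w
    using dist_gt_beyond_half_space[OF norm_u cx lam D0] that by (simp add: H_def)
  have H_C: "H \<inter> C = {}"
    using far_from_x diameter_bounded_bound[OF bC x] by fastforce
  have "open H" unfolding H_def
    by (intro open_Collect_conj open_Collect_less continuous_intros)
  then have fH: "H \<in> fmeasurable lborel"
    by (intro fmeasurableI2[OF fmeasurable_compact[OF compact_cball[of z r]] H_cball]) auto
  have fC: "C \<in> fmeasurable lborel" using C fmeasurable_compact by blast
  have "measure lborel C + measure lborel H = measure lborel (C \<union> H)"
    by (rule measure_Union[symmetric]) (use fH fC H_C in \<open>auto simp: fmeasurable_def\<close>)
  moreover have "measure lborel (C \<union> H) \<le> measure lborel (C \<union> cball z r)"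
    using H_cball fH fC C
    by (intro measure_mono_fmeasurable fmeasurable_compact compact_Un) (auto simp: fmeasurable_def)
  moreover have "measure lborel H = pi * t\<^sup>2 / 2"
    unfolding H_def using norm_u t by (intro measure_half_ball_2) auto
  ultimately show ?thesis by simp
qed

lemma diameter_Un_cball_le:
  fixes C :: "point set" and r :: real
  assumes C: "compact C" and z: "z \<in> C"
  defines "\<Delta> \<equiv> measure lborel (C \<union> cball z r) - measure lborel C"
  shows "diameter (C \<union> cball z r) \<le> max (diameter C + sqrt (2 * \<Delta> / pi)) (2 * r)"
proof -
  have "\<Delta> \<ge> 0" using measure_le_measure_Un_cball(1)[OF C] by (simp add: \<Delta>_def)
  then have sqrt_nonneg: "sqrt (2 * \<Delta> / pi) \<ge> 0" by simp
  have bC: "bounded C" using C compact_imp_bounded by blast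
  obtain p q where pq: "p \<in> C \<union> cball z r" "q \<in> C \<union> cball z r"
    and diam: "dist p q = diameter (C \<union> cball z r)"
    using diameter_compact_attained[of "C \<union> cball z r"] compact_Un[OF C compact_cball] z by blast
  have across: "dist a b \<le> diameter C + sqrt (2 * \<Delta> / pi)" if a: "a \<in> C" and b: "b \<in> cball z r" for a b
  proof (cases "dist a b \<le> diameter C")
    case True then show ?thesis using sqrt_nonneg by linarith
  next
    case False
    define t where "t = dist a b - diameter C"
    have t: "t > 0" using False by (simp add: t_def)
    have "dist a b \<le> dist a z + r" using dist_triangle[of a b z] b by simp
    then have "pi * t\<^sup>2 / 2 \<le> \<Delta>"
      unfolding \<Delta>_def by (intro half_disc_le_measure_increment[OF C a z t]) (simp add: t_def)
    then have "t\<^sup>2 \<le> 2 * \<Delta> / pi" by (simp add: field_simps)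
    then have "sqrt (t\<^sup>2) \<le> sqrt (2 * \<Delta> / pi)" by (rule real_sqrt_le_mono)
    then show ?thesis using t by (simp add: t_def)
  qed
  have "dist p q \<le> max (diameter C + sqrt (2 * \<Delta> / pi)) (2 * r)"
  proof -
    consider "p \<in> C" "q \<in> C" | "p \<in> C" "q \<in> cball z r" | "p \<in> cball z r" "q \<in> C"
      | "p \<in> cball z r" "q \<in> cball z r" using pq by blast
    then show ?thesis
    proof cases
      case 1
      then have "dist p q \<le> diameter C" by (intro diameter_bounded_bound[OF bC])
      then show ?thesis unfolding le_max_iff_disj using sqrt_nonneg by linarith
    next
      case 2 then show ?thesis using across by fastforce
    next
      case 3 then show ?thesis using across[of q p] by (simp add: dist_commute)
    next
      case 4 then show ?thesis using dist_triangle[of p q z] by (simp add: dist_commute)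
    qed
  qed
  then show ?thesis using diam by simp
qed

lemma EA_path_Suc_fst:
  "fst (EA_path P th (Suc i)) = fst (EA_path P th i) \<union>
     cball (fst (snd (EA_path P th i))) (dist (fst (snd (EA_path P th i))) (fst (snd (EA_path P th (Suc i)))))"
  by (cases "EA_path P th i") (simp add: Let_def)

lemma EA_path_compact_center:
  "compact (fst (EA_path P th i)) \<and> fst (snd (EA_path P th i)) \<in> fst (EA_path P th i)"
proof (induction i)
  case 0 then show ?case by simp
next
  case (Suc i) then show ?case unfolding EA_path_Suc_fst by auto
qed

lemma EA_path_diameter_bound:
  fixes P :: "nat \<Rightarrow> (point \<times> real) set" and th :: "nat \<Rightarrow> real"
  defines "C \<equiv> \<lambda>j. fst (EA_path P th j)"
  defines "A \<equiv> \<lambda>j. measure lborel (C j)"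
  shows "diameter (C i) \<le> sqrt (4 * A i / pi) + (\<Sum>j<i. sqrt (2 * (A (Suc j) - A j) / pi))"
proof -
  define z where "z j = fst (snd (EA_path P th j))" for j
  define r where "r j = dist (z j) (z (Suc j))" for j
  have C_Suc: "C (Suc j) = C j \<union> cball (z j) (r j)" for j
    unfolding C_def z_def r_def by (rule EA_path_Suc_fst)
  have C: "compact (C j)" and z: "z j \<in> C j" for j
    using EA_path_compact_center unfolding C_def z_def by auto
  have A_mono: "A j \<le> A (Suc j)" for j
    unfolding A_def C_Suc by (rule measure_le_measure_Un_cball(1)[OF C])
  have disc: "pi * (r j)\<^sup>2 \<le> A (Suc j)" for j
  proof -
    have "measure lborel (cball (z j) (r j)) \<le> A (Suc j)"
      unfolding A_def C_Suc by (rule measure_le_measure_Un_cball(2)[OF C])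
    then show ?thesis using measure_cball_2[of "r j" "z j"] by (simp add: r_def)
  qed
  show ?thesis
  proof (induction i)
    case 0
    then show ?case by (simp add: C_def A_def)
  next
    case (Suc i)
    define s where "s = sqrt (2 * (A (Suc i) - A i) / pi)"
    have "diameter (C (Suc i)) \<le> max (diameter (C i) + s) (2 * r i)"
      using diameter_Un_cball_le[OF C z] unfolding s_def A_def C_Suc r_def by simp
    moreover have "sqrt (4 * A i / pi) \<le> sqrt (4 * A (Suc i) / pi)"
      using A_mono[of i] by (simp add: divide_right_mono)
    moreover have "2 * r i \<le> sqrt (4 * A (Suc i) / pi)"
    proof -
      have "2 * r i = sqrt (4 * (pi * (r i)\<^sup>2) / pi)" by (simp add: real_sqrt_mult r_def)
      also have "\<dots> \<le> sqrt (4 * A (Suc i) / pi)"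
        using disc[of i] by (intro real_sqrt_le_mono divide_right_mono) auto
      finally show ?thesis .
    qed
    moreover have "(\<Sum>j<i. sqrt (2 * (A (Suc j) - A j) / pi)) \<ge> 0" and "s \<ge> 0"
      using A_mono by (auto intro: sum_nonneg simp: s_def)
    ultimately show ?case
      using Suc unfolding sum.lessThan_Suc s_def[symmetric] le_max_iff_disj max.bounded_iff by linarith
  qed
qed

theorem lemma5:
  fixes M :: "'p measure"
    and P :: "nat \<Rightarrow> 'p \<Rightarrow> (point \<times> real) set"
    and th :: "nat \<Rightarrow> 'p \<Rightarrow> real"
  assumes "prob_space M"
    and "\<forall>i. is_PPP M (P i) (UNIV \<times> {0..})"
    and "\<forall>i. distributed M lborel (th i) (exponential_density 1)"
    and "prob_space.indep_vars M (\<lambda>_. pp_space \<Otimes>\<^sub>M borel)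
           (\<lambda>k \<omega>. case k of Inl i \<Rightarrow> (P i \<omega>, 0)
                           | Inr j \<Rightarrow> ({}, th j \<omega>)) (UNIV :: (nat + nat) set)"
  shows "AE \<omega> in M. \<forall>i::nat.
           (let C = (\<lambda>j. fst (EA_path (\<lambda>j. P j \<omega>) (\<lambda>j. th j \<omega>) j));
                A = (\<lambda>j. measure lborel (C j))
            in diameter (C i) \<le> sqrt (4 * A i / pi)
                 + (\<Sum>j<i. sqrt (2 * (A (Suc j) - A j) / pi)))"
  unfolding Let_def by (intro AE_I2 allI EA_path_diameter_bound)

end
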